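(* (IG quadrature.) Let $\gamma>0$, $\delta>0$, $\sigma=\sqrt{\gamma\delta}$, $n\ge1$, and let $\{z_k\}_{k=1}^n$ and $\{h_k\}_{k=1}^n$ be the points and weights of the $n$-point Gauss--Hermite quadrature with respect to the standard normal density. Define $$ x_k=\frac{\delta}{\gamma}\,\phi_\sigma^{-1}(z_k),\qquad w_k=\frac{2h_k}{1+\phi_\sigma^{-1}(z_k)}. $$ Then $\{x_k\}$, $\{w_k\}$ serve as a numerical quadrature with respect to the density $f_{\mathrm{IG}}(x\,|\,\gamma,\delta)$ on $(0,\infty)$, and it is exact for moments of integer order $r$ with $1-n\le r\le n$: if $X\sim\mathrm{IG}(\gamma,\delta)$, then $\mathbb{E}(X^r)=\sum_{k=1}^n x_k^r\,w_k$ for every integer $r\in\{1-n,\dots,n\}$.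
   Context: The inverse Gaussian distribution $\mathrm{IG}(\gamma,\delta)$ has density $f_{\mathrm{IG}}(x\,|\,\gamma,\delta)=\frac{\delta}{\sqrt{2\pi x^3}}\exp\left(-\frac{(\gamma x-\delta)^2}{2x}\right)$ for $x>0$. The Gauss--Hermite quadrature here is with respect to $n(z)=e^{-z^2/2}/\sqrt{2\pi}$: $z_k$ are the roots of the probabilists' Hermite polynomial $He_n$ and the weights $h_k$ satisfy $\sum_k h_k q(z_k)=\int q(z)n(z)\,dz$ for all polynomials $q$ of degree at most $2n-1$. For $\sigma>0$, $\phi_\sigma^{-1}(z)=1+\frac{z^2}{2\sigma^2}+\frac{z}{\sigma}\sqrt{1+\frac{z^2}{4\sigma^2}}$ is the inverse of $\phi_\sigma(x)=\sigma\left(\sqrt{x}-\frac{1}{\sqrt{x}}\right)$, $x>0$. *)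

theory Defs
  imports "HOL-Probability.Probability" "HOL-Computational_Algebra.Polynomial"
begin

fun hermite_prob :: "nat \<Rightarrow> real poly" where
  "hermite_prob 0 = 1"
| "hermite_prob (Suc 0) = [:0, 1:]"
| "hermite_prob (Suc (Suc n)) =
     [:0, 1:] * hermite_prob (Suc n) - smult (real (Suc n)) (hermite_prob n)"

definition gauss_hermite :: "nat \<Rightarrow> (nat \<Rightarrow> real) \<Rightarrow> (nat \<Rightarrow> real) \<Rightarrow> bool" where
  "gauss_hermite n z h \<longleftrightarrow>
     inj_on z {1..n} \<and>
     (\<forall>k\<in>{1..n}. poly (hermite_prob n) (z k) = 0) \<and>
     (\<forall>q :: real poly. degree q \<le> 2 * n - 1 \<longrightarrow>
        (\<Sum>k=1..n. h k * poly q (z k)) = (LINT t|lborel. poly q t * std_normal_density t))"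

definition ig_density :: "real \<Rightarrow> real \<Rightarrow> real \<Rightarrow> real" where
  "ig_density \<gamma> \<delta> x = \<delta> / sqrt (2 * pi * x ^ 3) * exp (- ((\<gamma> * x - \<delta>)\<^sup>2) / (2 * x))"

definition phi_inv :: "real \<Rightarrow> real \<Rightarrow> real" where
  "phi_inv \<sigma> z = 1 + z\<^sup>2 / (2 * \<sigma>\<^sup>2) + z / \<sigma> * sqrt (1 + z\<^sup>2 / (4 * \<sigma>\<^sup>2))"

end

(*
  Substituting t = (delta/gamma) phi_sigma^{-1}(z) turns the inverse Gaussian law into the measure
  2 / (1 + phi_sigma^{-1}(z)) n(z) dz, so E(X^r) is the normal integral of
  G_r(z) = (delta/gamma phi_sigma^{-1}(z))^r * 2 / (1 + phi_sigma^{-1}(z)), while the quadrature sum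
  is exactly sum_k h_k G_r(z_k).  G_r is not a polynomial, but its even part is: writing
  phi_sigma^{-1}(z) = u^2 we have z/sigma = u - 1/u, and z -> -z sends u to 1/u, so
  G_r(z) + G_r(-z) = 2 (delta/gamma)^r (u^(2r-1) + u^(1-2r)) / (u + 1/u), a Fibonacci polynomial in z
  of degree |2r - 1| - 1 <= 2n - 2.  The normal integral and the Gauss-Hermite rule are both invariant
  under z -> -z (the nodes are the roots of the even or odd He_n, and each weight is the integral of
  a Lagrange basis polynomial), so both sides only see the even part, on which the rule is exact.
*)
theory Submission
  imports Defs
begin

section \<open>The square root of the inverse of phi_sigma\<close>

definition phi_inv_sqrt :: "real \<Rightarrow> real \<Rightarrow> real" where
  "phi_inv_sqrt \<sigma> z = z / (2 * \<sigma>) + sqrt (1 + (z / (2 * \<sigma>))\<^sup>2)"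

lemma phi_inv_sqrt_inverse: "1 / phi_inv_sqrt \<sigma> z = sqrt (1 + (z / (2 * \<sigma>))\<^sup>2) - z / (2 * \<sigma>)"
proof -
  define a where "a = z / (2 * \<sigma>)"
  define q where "q = sqrt (1 + a\<^sup>2)"
  have "\<bar>a\<bar> < q"
    unfolding q_def by (metis real_sqrt_abs real_sqrt_less_iff less_add_one add.commute)
  moreover have "(a + q) * (q - a) = 1"
    unfolding q_def by (simp add: algebra_simps power2_eq_square)
  ultimately show ?thesis
    unfolding phi_inv_sqrt_def a_def[symmetric] q_def[symmetric] by (simp add: field_simps)
qed

lemma phi_inv_sqrt_pos: "phi_inv_sqrt \<sigma> z > 0"
proof -
  have "\<bar>z / (2 * \<sigma>)\<bar> < sqrt (1 + (z / (2 * \<sigma>))\<^sup>2)"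
    by (metis real_sqrt_abs real_sqrt_less_iff less_add_one add.commute)
  then show ?thesis unfolding phi_inv_sqrt_def by linarith
qed

lemma phi_inv_sqrt_diff_inverse: "\<sigma> \<noteq> 0 \<Longrightarrow> phi_inv_sqrt \<sigma> z - 1 / phi_inv_sqrt \<sigma> z = z / \<sigma>"
  unfolding phi_inv_sqrt_inverse by (simp add: phi_inv_sqrt_def field_simps)

lemma phi_inv_sqrt_uminus: "phi_inv_sqrt \<sigma> (- z) = 1 / phi_inv_sqrt \<sigma> z"
  unfolding phi_inv_sqrt_inverse by (simp add: phi_inv_sqrt_def power2_eq_square)

lemma phi_inv_sqrt_phi:
  assumes "\<sigma> > 0" "v > 0"
  shows "phi_inv_sqrt \<sigma> (\<sigma> * (v - 1 / v)) = v"
proof -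
  have "1 + ((v - 1 / v) / 2)\<^sup>2 = ((v + 1 / v) / 2)\<^sup>2"
    using assms by (simp add: field_simps power2_eq_square)
  then have sqrt_eq: "sqrt (1 + ((v - 1 / v) / 2)\<^sup>2) = (v + 1 / v) / 2"
    using assms by simp
  have "\<sigma> * (v - 1 / v) / (2 * \<sigma>) = (v - 1 / v) / 2"
    using assms by simp
  then show ?thesis
    unfolding phi_inv_sqrt_def by (simp only: sqrt_eq) (simp add: field_simps)
qed

lemma inj_phi_inv_sqrt: "\<sigma> \<noteq> 0 \<Longrightarrow> inj (phi_inv_sqrt \<sigma>)"
  by (rule inj_on_inverseI[where g = "\<lambda>u. \<sigma> * (u - 1 / u)"]) (simp add: phi_inv_sqrt_diff_inverse)

lemma range_phi_inv_sqrt: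
  assumes "\<sigma> > 0"
  shows "range (phi_inv_sqrt \<sigma>) = {0<..}"
proof
  show "range (phi_inv_sqrt \<sigma>) \<subseteq> {0<..}"
    using phi_inv_sqrt_pos by auto
  show "{0<..} \<subseteq> range (phi_inv_sqrt \<sigma>)"
  proof
    fix v :: real assume "v \<in> {0<..}"
    then have "v = phi_inv_sqrt \<sigma> (\<sigma> * (v - 1 / v))"
      using phi_inv_sqrt_phi[OF assms] by simp
    then show "v \<in> range (phi_inv_sqrt \<sigma>)" by (rule range_eqI)
  qed
qed

lemma phi_inv_eq_phi_inv_sqrt_sq: "\<sigma> > 0 \<Longrightarrow> phi_inv \<sigma> z = (phi_inv_sqrt \<sigma> z)\<^sup>2"
proof -
  assume "\<sigma> > 0"
  have "z\<^sup>2 / (4 * \<sigma>\<^sup>2) = (z / (2 * \<sigma>))\<^sup>2"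
    by (simp add: power2_eq_square)
  moreover have "(sqrt (1 + (z / (2 * \<sigma>))\<^sup>2))\<^sup>2 = 1 + (z / (2 * \<sigma>))\<^sup>2"
    by simp
  ultimately show ?thesis
    unfolding phi_inv_def phi_inv_sqrt_def using \<open>\<sigma> > 0\<close>
    by (simp add: power2_sum field_simps power2_eq_square)
qed

lemma continuous_phi_inv: "\<sigma> \<noteq> 0 \<Longrightarrow> continuous_on UNIV (phi_inv \<sigma>)"
  unfolding phi_inv_def[abs_def] by (intro continuous_intros) (simp_all add: add_pos_nonneg)

lemma phi_inv_sqrt_has_real_derivative:
  assumes "\<sigma> > 0"
  shows "(phi_inv_sqrt \<sigma> has_real_derivative
           (phi_inv_sqrt \<sigma> z)\<^sup>2 / (\<sigma> * ((phi_inv_sqrt \<sigma> z)\<^sup>2 + 1))) (at z)"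
proof -
  define a where "a = z / (2 * \<sigma>)"
  define q where "q = sqrt (1 + a\<^sup>2)"
  define u where "u = phi_inv_sqrt \<sigma> z"
  have q_pos: "q > 0" unfolding q_def by (simp add: add_pos_nonneg)
  have "0 < 1 + (z / (2 * \<sigma>))\<^sup>2" by (simp add: add_pos_nonneg)
  then have "(phi_inv_sqrt \<sigma> has_real_derivative 1 / (2 * \<sigma>) + a / (2 * \<sigma> * q)) (at z)"
    unfolding phi_inv_sqrt_def[abs_def] a_def q_def using assms
    by (auto intro!: derivative_eq_intros simp: add_pos_nonneg field_simps power2_eq_square)
  moreover have "1 / (2 * \<sigma>) + a / (2 * \<sigma> * q) = u\<^sup>2 / (\<sigma> * (u\<^sup>2 + 1))"
  proof -
    have "u = a + q" unfolding u_def a_def q_def phi_inv_sqrt_def ..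
    moreover have "q\<^sup>2 = 1 + a\<^sup>2" unfolding q_def by simp
    ultimately have "u\<^sup>2 + 1 = 2 * q * u" by (simp add: power2_eq_square algebra_simps)
    moreover have "u > 0" unfolding u_def by (rule phi_inv_sqrt_pos)
    ultimately have "u\<^sup>2 / (\<sigma> * (u\<^sup>2 + 1)) = u / (2 * \<sigma> * q)"
      by (simp add: power2_eq_square)
    also have "\<dots> = 1 / (2 * \<sigma>) + a / (2 * \<sigma> * q)"
      using assms q_pos \<open>u = a + q\<close> by (simp add: field_simps)
    finally show ?thesis ..
  qed
  ultimately show ?thesis unfolding u_def by simp
qed

section \<open>Fibonacci polynomials and the even part of the moment integrand\<close>

fun fib_poly :: "real \<Rightarrow> nat \<Rightarrow> real poly" where
  "fib_poly c 0 = 0"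
| "fib_poly c (Suc 0) = 1"
| "fib_poly c (Suc (Suc m)) = [:0, c:] * fib_poly c (Suc m) + fib_poly c m"

lemma poly_fib_poly:
  assumes "u \<noteq> 0" and "c * t = u - 1 / u"
  shows "poly (fib_poly c m) t * (u + 1 / u) = u ^ m - (- 1 / u) ^ m"
  using assms(2)
proof (induction c m rule: fib_poly.induct)
  case (3 c m)
  have "poly (fib_poly c (Suc (Suc m))) t * (u + 1 / u)
      = c * t * (poly (fib_poly c (Suc m)) t * (u + 1 / u)) + poly (fib_poly c m) t * (u + 1 / u)"
    by (simp add: algebra_simps)
  also have "\<dots> = (u - 1 / u) * (u ^ Suc m - (- 1 / u) ^ Suc m) + (u ^ m - (- 1 / u) ^ m)"
    by (simp only: 3)
  also have "\<dots> = u ^ Suc (Suc m) - (- 1 / u) ^ Suc (Suc m)"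
    using assms(1) by (simp add: field_simps)
  finally show ?case .
qed (use assms(1) in \<open>auto simp: field_simps\<close>)

lemma degree_fib_poly: "degree (fib_poly c m) \<le> m - 1"
proof (induction c m rule: fib_poly.induct)
  case (3 c m)
  have "degree ([:0, c:] * fib_poly c (Suc m)) \<le> Suc m"
    using 3 degree_mult_le[of "[:0, c:]" "fib_poly c (Suc m)"] by simp
  moreover have "degree (fib_poly c m) \<le> Suc m"
    using 3 by linarith
  ultimately have "degree (fib_poly c (Suc (Suc m))) \<le> Suc m"
    unfolding fib_poly.simps by (rule degree_add_le)
  then show ?case by simp
qed auto

lemma power_int_add_power_int_uminus_odd:
  fixes u :: real
  assumes "u > 0" and "c * t = u - 1 / u" and "odd k"
  shows "u powi k + u powi (- k) = poly (fib_poly c (nat \<bar>k\<bar>)) t * (u + 1 / u)"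
proof -
  define m where "m = nat \<bar>k\<bar>"
  have "odd m"
    using assms(3) unfolding m_def by (simp add: even_nat_iff)
  then have "(- 1 / u) ^ m = - ((1 / u) ^ m)"
    by (simp add: power_minus_odd)
  moreover have "u powi k + u powi (- k) = u ^ m + (1 / u) ^ m"
    unfolding m_def by (cases "k \<ge> 0") (auto simp: power_int_def power_inverse inverse_eq_divide)
  ultimately show ?thesis
    using poly_fib_poly[of u c t m] assms(1,2) unfolding m_def by simp
qed

lemma ig_moment_integrand_even_part:
  assumes "\<mu> > 0" and "\<sigma> > 0"
  shows "(\<mu> * phi_inv \<sigma> z) powi r * (2 / (1 + phi_inv \<sigma> z))
         + (\<mu> * phi_inv \<sigma> (- z)) powi r * (2 / (1 + phi_inv \<sigma> (- z)))
       = 2 * \<mu> powi r * poly (fib_poly (1 / \<sigma>) (nat \<bar>2 * r - 1\<bar>)) z"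
proof -
  define u where "u = phi_inv_sqrt \<sigma> z"
  define a b where "a = u powi (2 * r - 1)" and "b = u powi (- (2 * r - 1))"
  have u: "u > 0"
    unfolding u_def by (rule phi_inv_sqrt_pos)
  have phi: "phi_inv \<sigma> z = u\<^sup>2" "phi_inv \<sigma> (- z) = 1 / u\<^sup>2"
    unfolding u_def phi_inv_eq_phi_inv_sqrt_sq[OF assms(2)] phi_inv_sqrt_uminus
    by (simp_all add: power_divide)
  have sq: "(u\<^sup>2) powi r = u powi (2 * r)"
    using power_int_mult[of u 2 r] by simp
  have pw: "(u\<^sup>2) powi r = u * a" "(1 / u\<^sup>2) powi r = b / u"
    unfolding a_def b_def using u
    by (simp_all add: sq power_int_divide_distrib power_int_diff power_int_minus_divide)
  have "(\<mu> * phi_inv \<sigma> z) powi r * (2 / (1 + phi_inv \<sigma> z))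
         + (\<mu> * phi_inv \<sigma> (- z)) powi r * (2 / (1 + phi_inv \<sigma> (- z)))
       = 2 * \<mu> powi r * ((a + b) / (u + 1 / u))"
  proof -
    define Q where "Q = 1 + u\<^sup>2"
    have "Q > 0" "1 + 1 / u\<^sup>2 = Q / u\<^sup>2" "u + 1 / u = Q / u"
      unfolding Q_def using u by (simp_all add: add_pos_nonneg field_simps power2_eq_square)
    then show ?thesis
      unfolding phi power_int_mult_distrib pw Q_def[symmetric] using u
      by (simp add: field_simps power2_eq_square)
  qed
  also have "(a + b) / (u + 1 / u) = poly (fib_poly (1 / \<sigma>) (nat \<bar>2 * r - 1\<bar>)) z"
  proof -
    have "1 / \<sigma> * z = u - 1 / u"
      unfolding u_def phi_inv_sqrt_diff_inverse[OF less_imp_neq[OF assms(2), symmetric]] by simp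
    then have "a + b = poly (fib_poly (1 / \<sigma>) (nat \<bar>2 * r - 1\<bar>)) z * (u + 1 / u)"
      unfolding a_def b_def using u by (intro power_int_add_power_int_uminus_odd) simp_all
    moreover have "u + 1 / u > 0"
      using u by (simp add: add_pos_pos)
    ultimately show ?thesis by simp
  qed
  finally show ?thesis .
qed

section \<open>Symmetry of Gauss--Hermite rules\<close>

definition lagrange_basis :: "real set \<Rightarrow> real \<Rightarrow> real poly" where
  "lagrange_basis S a = (\<Prod>b\<in>S - {a}. smult (1 / (a - b)) [:- b, 1:])"

lemma poly_lagrange_basis: "poly (lagrange_basis S a) x = (\<Prod>b\<in>S - {a}. (x - b) / (a - b))"
  unfolding lagrange_basis_def poly_prod by (intro prod.cong) (auto simp: diff_divide_distrib)

lemma degree_lagrange_basis: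
  assumes "finite S"
  shows "degree (lagrange_basis S a) \<le> card (S - {a})"
proof -
  have "degree (lagrange_basis S a) \<le> (\<Sum>b\<in>S - {a}. degree (smult (1 / (a - b)) [:- b, 1:]))"
    unfolding lagrange_basis_def
    using degree_prod_sum_le[of "S - {a}" "\<lambda>b. smult (1 / (a - b)) [:- b, 1:]"] assms
    by (simp only: o_def finite_Diff)
  also have "\<dots> \<le> (\<Sum>b\<in>S - {a}. 1)"
    by (intro sum_mono) (simp add: degree_smult_le)
  finally show ?thesis by simp
qed

lemma poly_lagrange_basis_self: "poly (lagrange_basis S a) a = 1"
  unfolding poly_lagrange_basis by (intro prod.neutral) simp

lemma poly_lagrange_basis_other:
  "finite S \<Longrightarrow> b \<in> S \<Longrightarrow> b \<noteq> a \<Longrightarrow> poly (lagrange_basis S a) b = 0"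
  unfolding poly_lagrange_basis by (rule prod_zero) auto

lemma poly_lagrange_basis_reflect:
  assumes "uminus ` S = S"
  shows "poly (lagrange_basis S (- a)) (- x) = poly (lagrange_basis S a) x"
proof -
  have "poly (lagrange_basis S (- a)) (- x) = (\<Prod>b\<in>uminus ` (S - {a}). (- x - b) / (- a - b))"
    unfolding poly_lagrange_basis by (simp add: image_set_diff assms)
  also have "\<dots> = poly (lagrange_basis S a) x"
    unfolding poly_lagrange_basis
    by (subst prod.reindex) (auto intro!: prod.cong, metis minus_diff_eq minus_divide_divide)
  finally show ?thesis .
qed

lemma hermite_prob_uminus: "poly (hermite_prob n) (- t) = (- 1) ^ n * poly (hermite_prob n) t"
  by (induction n rule: hermite_prob.induct) (auto simp: algebra_simps)

lemma degree_hermite_prob: "degree (hermite_prob n) = n"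
  and lead_coeff_hermite_prob: "coeff (hermite_prob n) n = 1"
proof -
  have "degree (hermite_prob n) \<le> n \<and> coeff (hermite_prob n) n = 1"
  proof (induction n rule: hermite_prob.induct)
    case (3 n)
    have "degree ([:0, 1:] * hermite_prob (Suc n)) \<le> Suc (Suc n)"
      using 3 by (simp add: degree_pCons_eq_if)
    moreover have "degree (smult (real (Suc n)) (hermite_prob n)) \<le> Suc (Suc n)"
      using 3 by (meson degree_smult_le le_SucI order_trans)
    ultimately have "degree (hermite_prob (Suc (Suc n))) \<le> Suc (Suc n)"
      unfolding hermite_prob.simps by (intro degree_diff_le)
    moreover have "coeff (hermite_prob n) (Suc (Suc n)) = 0"
      using 3 by (intro coeff_eq_0) auto
    ultimately show ?case using 3 by simp
  qed auto
  then show "degree (hermite_prob n) = n" "coeff (hermite_prob n) n = 1"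
    using le_degree[of "hermite_prob n" n] by simp_all
qed

lemma hermite_prob_roots_uminus:
  "uminus ` {t. poly (hermite_prob n) t = 0} = {t. poly (hermite_prob n) t = 0}"
proof -
  have "- t \<in> {t. poly (hermite_prob n) t = 0}" if "t \<in> {t. poly (hermite_prob n) t = 0}" for t
    using that by (simp add: hermite_prob_uminus)
  then show ?thesis by (auto simp: image_iff) (metis minus_minus)
qed

lemma gauss_hermite_exact:
  "gauss_hermite n z h \<Longrightarrow> degree q \<le> 2 * n - 1 \<Longrightarrow>
     (\<Sum>k=1..n. h k * poly q (z k)) = (LINT t|lborel. poly q t * std_normal_density t)"
  unfolding gauss_hermite_def by blast

lemma gauss_hermite_nodes:
  assumes "gauss_hermite n z h"
  shows "z ` {1..n} = {t. poly (hermite_prob n) t = 0}"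
proof (rule card_subset_eq)
  have "hermite_prob n \<noteq> 0"
    using lead_coeff_hermite_prob[of n] by auto
  then show finite: "finite {t. poly (hermite_prob n) t = 0}"
    by (rule poly_roots_finite)
  have "card {t. poly (hermite_prob n) t = 0} \<le> n"
    using card_poly_roots_bound[OF \<open>hermite_prob n \<noteq> 0\<close>] by (simp add: degree_hermite_prob)
  show sub: "z ` {1..n} \<subseteq> {t. poly (hermite_prob n) t = 0}"
    using assms unfolding gauss_hermite_def by auto
  have "card (z ` {1..n}) = n"
    using assms card_image[of z "{1..n}"] unfolding gauss_hermite_def by simp
  then show "card (z ` {1..n}) = card {t. poly (hermite_prob n) t = 0}"
    using card_mono[OF finite sub] \<open>card {t. poly (hermite_prob n) t = 0} \<le> n\<close> by linarith
qed

lemma gauss_hermite_weight: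
  assumes "gauss_hermite n z h" and "k \<in> {1..n}"
  shows "h k = (LINT t|lborel. poly (lagrange_basis (z ` {1..n}) (z k)) t * std_normal_density t)"
proof -
  let ?L = "lagrange_basis (z ` {1..n}) (z k)"
  have inj: "inj_on z {1..n}"
    using assms(1) unfolding gauss_hermite_def by blast
  have "degree ?L \<le> card (z ` {1..n} - {z k})"
    by (rule degree_lagrange_basis) simp
  also have "\<dots> = n - 1"
    using assms(2) inj by (simp add: card_image)
  finally have deg: "degree ?L \<le> 2 * n - 1" by linarith
  have "(\<Sum>j=1..n. h j * poly ?L (z j)) = (\<Sum>j=1..n. if j = k then h k else 0)"
    using assms(2) inj
    by (intro sum.cong refl) (auto simp: poly_lagrange_basis_self poly_lagrange_basis_other inj_on_eq_iff)
  then show ?thesis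
    using gauss_hermite_exact[OF assms(1) deg] assms(2) by simp
qed

lemma gauss_hermite_sum_uminus:
  assumes "gauss_hermite n z h"
  shows "(\<Sum>k=1..n. h k * F (- z k)) = (\<Sum>k=1..n. h k * F (z k))"
proof -
  define Z where "Z = z ` {1..n}"
  define W where "W a = (LINT t|lborel. poly (lagrange_basis Z a) t * std_normal_density t)" for a
  have inj: "inj_on z {1..n}"
    using assms unfolding gauss_hermite_def by blast
  have Z_uminus: "uminus ` Z = Z"
    unfolding Z_def gauss_hermite_nodes[OF assms] by (rule hermite_prob_roots_uminus)
  have W_uminus: "W (- a) = W a" for a
    using lborel_integral_real_affine[of "-1" "\<lambda>t. poly (lagrange_basis Z (- a)) t * std_normal_density t" 0]
    by (simp add: W_def poly_lagrange_basis_reflect[OF Z_uminus] std_normal_density_def)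
  have sum_nodes: "(\<Sum>k=1..n. h k * G (z k)) = (\<Sum>a\<in>Z. W a * G a)" for G
    unfolding Z_def W_def using inj
    by (simp add: sum.reindex gauss_hermite_weight[OF assms])
  have "(\<Sum>k=1..n. h k * F (- z k)) = (\<Sum>a\<in>Z. W a * F (- a))"
    using sum_nodes[of "\<lambda>a. F (- a)"] by simp
  also have "\<dots> = (\<Sum>a\<in>uminus ` Z. W a * F a)"
    by (simp add: sum.reindex W_uminus)
  also have "\<dots> = (\<Sum>k=1..n. h k * F (z k))"
    unfolding Z_uminus sum_nodes ..
  finally show ?thesis .
qed

section \<open>Moments of the inverse Gaussian law as normal integrals\<close>

lemma lborel_integral_change_of_variables_real:
  fixes f g g' :: "real \<Rightarrow> real"
  assumes deriv: "\<And>x. (g has_real_derivative g' x) (at x)"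
    and inj: "inj g"
    and f_meas: "set_borel_measurable borel (range g) f"
    and integrable: "integrable lborel (\<lambda>x. \<bar>g' x\<bar> * f (g x))"
  shows "set_integrable lborel (range g) f"
    and "(LINT y:range g|lborel. f y) = (LINT x|lborel. \<bar>g' x\<bar> * f (g x))"
proof -
  have "(\<lambda>x. \<bar>g' x\<bar> * f (g x)) \<in> borel_measurable lborel"
    using integrable by (rule borel_measurable_integrable)
  then have "(\<lambda>x. \<bar>g' x\<bar> * f (g x)) absolutely_integrable_on UNIV"
    using integrable by (simp add: set_integrable_def integrable_completion)
  moreover note integral_lborel[OF integrable]
  ultimately have "f absolutely_integrable_on range g
      \<and> integral (range g) f = (LINT x|lborel. \<bar>g' x\<bar> * f (g x))"
    using has_absolute_integral_change_of_variables_1'[of UNIV g g' f "LINT x|lborel. \<bar>g' x\<bar> * f (g x)"] deriv inj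
    by simp
  then have lebesgue: "set_integrable lebesgue (range g) f"
    and integral: "integral (range g) f = (LINT x|lborel. \<bar>g' x\<bar> * f (g x))"
    by auto
  have meas: "(\<lambda>x. indicator (range g) x *\<^sub>R f x) \<in> borel_measurable lborel"
    using f_meas unfolding set_borel_measurable_def by simp
  show "set_integrable lborel (range g) f"
    using lebesgue integrable_completion[OF meas] unfolding set_integrable_def by blast
  have "(LINT y:range g|lborel. f y) = (LINT y:range g|lebesgue. f y)"
    using integral_completion[OF meas] unfolding set_lebesgue_integral_def by simp
  also have "\<dots> = integral (range g) f"
    using lebesgue by (rule set_lebesgue_integral_eq_integral)
  finally show "(LINT y:range g|lborel. f y) = (LINT x|lborel. \<bar>g' x\<bar> * f (g x))"
    unfolding integral .
qed

lemma ig_density_sqr_jacobian: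
  assumes "\<gamma> > 0" and "\<delta> > 0" and "u > 0"
  shows "2 * (\<delta> / \<gamma>) * u ^ 3 / (sqrt (\<gamma> * \<delta>) * (1 + u\<^sup>2)) * ig_density \<gamma> \<delta> (\<delta> / \<gamma> * u\<^sup>2)
       = 2 / (1 + u\<^sup>2) * std_normal_density (sqrt (\<gamma> * \<delta>) * (u - 1 / u))"
proof -
  define \<sigma> m where "\<sigma> = sqrt (\<gamma> * \<delta>)" and "m = sqrt (\<delta> / \<gamma>)"
  have pos: "\<sigma> > 0" "m > 0"
    unfolding \<sigma>_def m_def using assms by simp_all
  have \<gamma>: "\<gamma> = \<sigma> / m" and \<delta>: "\<delta> = \<sigma> * m" and \<delta>\<gamma>: "\<delta> / \<gamma> = m\<^sup>2"
    unfolding \<sigma>_def m_def using assms by (simp_all add: real_sqrt_divide real_sqrt_mult field_simps)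
  have "(m\<^sup>2 * u\<^sup>2) ^ 3 = ((m * u) ^ 3)\<^sup>2"
    by (simp add: power_mult_distrib flip: power_mult)
  then have "sqrt (2 * pi * (m\<^sup>2 * u\<^sup>2) ^ 3) = sqrt (2 * pi) * (m * u) ^ 3"
    using pos assms(3) by (simp only: real_sqrt_mult real_sqrt_abs) simp
  moreover have "- ((\<gamma> * (m\<^sup>2 * u\<^sup>2) - \<delta>)\<^sup>2) / (2 * (m\<^sup>2 * u\<^sup>2)) = - (\<sigma> * (u - 1 / u))\<^sup>2 / 2"
    unfolding \<gamma> \<delta> using pos assms(3) by (simp add: field_simps power2_eq_square)
  ultimately have ig: "ig_density \<gamma> \<delta> (m\<^sup>2 * u\<^sup>2)
      = \<sigma> * m / (sqrt (2 * pi) * (m * u) ^ 3) * exp (- (\<sigma> * (u - 1 / u))\<^sup>2 / 2)"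
    unfolding ig_density_def by (simp only: \<delta>)
  define S Q where "S = sqrt (2 * pi)" and "Q = 1 + u\<^sup>2"
  have "S > 0" "Q > 0"
    unfolding S_def Q_def by (simp_all add: add_pos_nonneg)
  then show ?thesis
    unfolding \<sigma>_def[symmetric] \<delta>\<gamma> ig std_normal_density_def S_def[symmetric] Q_def[symmetric]
    using pos assms(3) by (simp add: field_simps power2_eq_square power3_eq_cube)
qed

lemma ig_set_integral_substitution:
  fixes \<gamma> \<delta> :: real and f :: "real \<Rightarrow> real"
  defines "\<sigma> \<equiv> sqrt (\<gamma> * \<delta>)"
  assumes "\<gamma> > 0" and "\<delta> > 0" and "continuous_on {0<..} f"
    and "integrable lborel
           (\<lambda>z. f (\<delta> / \<gamma> * phi_inv \<sigma> z) * (2 / (1 + phi_inv \<sigma> z)) * std_normal_density z)"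
  shows "set_integrable lborel {0<..} (\<lambda>t. f t * ig_density \<gamma> \<delta> t)"
    and "(LINT t:{0<..}|lborel. f t * ig_density \<gamma> \<delta> t)
         = (LINT z|lborel. f (\<delta> / \<gamma> * phi_inv \<sigma> z) * (2 / (1 + phi_inv \<sigma> z)) * std_normal_density z)"
proof -
  have \<sigma>: "\<sigma> > 0"
    unfolding \<sigma>_def using assms(2,3) by simp
  define u where "u = phi_inv_sqrt \<sigma>"
  define g where "g z = \<delta> / \<gamma> * (u z)\<^sup>2" for z
  define g' where "g' z = 2 * (\<delta> / \<gamma>) * u z ^ 3 / (\<sigma> * (1 + (u z)\<^sup>2))" for z
  have u_pos: "u z > 0" for z
    unfolding u_def by (rule phi_inv_sqrt_pos)
  have g_eq: "g z = \<delta> / \<gamma> * phi_inv \<sigma> z" for z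
    unfolding g_def u_def phi_inv_eq_phi_inv_sqrt_sq[OF \<sigma>] ..
  have deriv: "(g has_real_derivative g' z) (at z)" for z
  proof -
    have "(g has_real_derivative
        \<delta> / \<gamma> * (of_nat 2 * ((u z)\<^sup>2 / (\<sigma> * ((u z)\<^sup>2 + 1)) * u z ^ (2 - Suc 0)))) (at z)"
      unfolding g_def[abs_def] u_def
      by (intro DERIV_cmult DERIV_power phi_inv_sqrt_has_real_derivative[OF \<sigma>])
    then show ?thesis
      unfolding g'_def by (simp add: power2_eq_square power3_eq_cube add.commute mult_ac)
  qed
  have inj: "inj g"
  proof (rule injI)
    fix a b assume "g a = g b"
    then have "(u a)\<^sup>2 = (u b)\<^sup>2"
      unfolding g_def using assms(2,3) by simp
    then have "u a = u b"
      using u_pos by (simp add: power2_eq_iff_nonneg less_imp_le)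
    then show "a = b"
      using inj_phi_inv_sqrt[of \<sigma>] \<sigma> unfolding u_def by (simp add: inj_eq)
  qed
  have range: "range g = {0<..}"
  proof -
    have "range g = (\<lambda>v. \<delta> / \<gamma> * v\<^sup>2) ` {0<..}"
      unfolding g_def[abs_def] u_def range_phi_inv_sqrt[OF \<sigma>, symmetric] by (simp add: image_image)
    also have "\<dots> = {0<..}"
    proof
      show "(\<lambda>v. \<delta> / \<gamma> * v\<^sup>2) ` {0<..} \<subseteq> {0<..}"
        using assms(2,3) by auto
      show "{0<..} \<subseteq> (\<lambda>v. \<delta> / \<gamma> * v\<^sup>2) ` {0<..}"
      proof
        fix t :: real assume "t \<in> {0<..}"
        then have "t = \<delta> / \<gamma> * (sqrt (t / (\<delta> / \<gamma>)))\<^sup>2" "sqrt (t / (\<delta> / \<gamma>)) \<in> {0<..}"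
          using assms(2,3) by auto
        then show "t \<in> (\<lambda>v. \<delta> / \<gamma> * v\<^sup>2) ` {0<..}" by blast
      qed
    qed
    finally show ?thesis .
  qed
  have "continuous_on {0<..} (\<lambda>t. f t * ig_density \<gamma> \<delta> t)"
    unfolding ig_density_def using assms(4) by (intro continuous_intros) auto
  then have meas: "set_borel_measurable borel (range g) (\<lambda>t. f t * ig_density \<gamma> \<delta> t)"
    unfolding set_borel_measurable_def range by (intro borel_measurable_continuous_on_indicator) auto
  have jacobian: "\<bar>g' z\<bar> * (f (g z) * ig_density \<gamma> \<delta> (g z))
      = f (\<delta> / \<gamma> * phi_inv \<sigma> z) * (2 / (1 + phi_inv \<sigma> z)) * std_normal_density z" for z
  proof -
    have "g' z > 0"
      unfolding g'_def using assms(2,3) \<sigma> u_pos[of z] by (simp add: add_pos_nonneg)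
    then have "\<bar>g' z\<bar> * (f (g z) * ig_density \<gamma> \<delta> (g z)) = f (g z) * (g' z * ig_density \<gamma> \<delta> (g z))"
      by simp
    also have "g' z * ig_density \<gamma> \<delta> (g z) = 2 / (1 + phi_inv \<sigma> z) * std_normal_density z"
    proof -
      have "\<sigma> * (u z - 1 / u z) = z"
        unfolding u_def using phi_inv_sqrt_diff_inverse[of \<sigma> z] \<sigma> by (simp add: field_simps)
      moreover have "phi_inv \<sigma> z = (u z)\<^sup>2"
        unfolding u_def phi_inv_eq_phi_inv_sqrt_sq[OF \<sigma>] ..
      ultimately show ?thesis
        using ig_density_sqr_jacobian[OF assms(2,3) u_pos[of z]]
        unfolding g'_def g_def \<sigma>_def[symmetric] by simp
    qed
    finally show ?thesis
      unfolding g_eq by (simp add: mult_ac)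
  qed
  show "set_integrable lborel {0<..} (\<lambda>t. f t * ig_density \<gamma> \<delta> t)"
    and "(LINT t:{0<..}|lborel. f t * ig_density \<gamma> \<delta> t)
         = (LINT z|lborel. f (\<delta> / \<gamma> * phi_inv \<sigma> z) * (2 / (1 + phi_inv \<sigma> z)) * std_normal_density z)"
    using lborel_integral_change_of_variables_real[OF deriv inj meas] assms(5)
    unfolding jacobian range by simp_all
qed

lemma integrable_poly_std_normal: "integrable lborel (\<lambda>z. poly p z * std_normal_density z)"
  unfolding poly_altdef
  by (simp add: sum_distrib_right mult.assoc integrable_std_normal_moment mult.commute[of "_ ^ _"])

lemma std_normal_integral_even_part:
  fixes G :: "real \<Rightarrow> real"
  assumes nonneg: "\<And>z. G z \<ge> 0" and meas: "G \<in> borel_measurable borel"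
    and integrable: "integrable lborel (\<lambda>z. (G z + G (- z)) * std_normal_density z)"
  shows "integrable lborel (\<lambda>z. G z * std_normal_density z)"
    and "(LINT z|lborel. G z * std_normal_density z)
         = (LINT z|lborel. (G z + G (- z)) * std_normal_density z) / 2"
proof -
  show G_int: "integrable lborel (\<lambda>z. G z * std_normal_density z)"
  proof (rule Bochner_Integration.integrable_bound[OF integrable])
    show "(\<lambda>z. G z * std_normal_density z) \<in> borel_measurable lborel"
      using meas by measurable
    show "AE z in lborel. norm (G z * std_normal_density z)
                          \<le> norm ((G z + G (- z)) * std_normal_density z)"
      using nonneg by (intro AE_I2) (simp add: normal_density_nonneg mult_right_mono add_nonneg_nonneg)
  qed
  have reflect: "(LINT z|lborel. G (- z) * std_normal_density z) = (LINT z|lborel. G z * std_normal_density z)"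
    using lborel_integral_real_affine[of "-1" "\<lambda>z. G z * std_normal_density z" 0]
    by (simp add: std_normal_density_def)
  have "integrable lborel (\<lambda>z. G (- z) * std_normal_density z)"
    using lborel_integrable_real_affine[OF G_int, of "-1" 0] by (simp add: std_normal_density_def)
  then show "(LINT z|lborel. G z * std_normal_density z)
         = (LINT z|lborel. (G z + G (- z)) * std_normal_density z) / 2"
    using G_int by (simp add: distrib_right reflect)
qed

lemma ig_moment_eq_normal_integral:
  fixes \<gamma> \<delta> :: real and r :: int
  defines "\<sigma> \<equiv> sqrt (\<gamma> * \<delta>)"
  assumes "\<gamma> > 0" and "\<delta> > 0"
  shows "set_integrable lborel {0<..} (\<lambda>t. t powi r * ig_density \<gamma> \<delta> t)"
    and "(LINT t:{0<..}|lborel. t powi r * ig_density \<gamma> \<delta> t)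
         = (\<delta> / \<gamma>) powi r * (LINT t|lborel. poly (fib_poly (1 / \<sigma>) (nat \<bar>2 * r - 1\<bar>)) t * std_normal_density t)"
proof -
  define P where "P = fib_poly (1 / \<sigma>) (nat \<bar>2 * r - 1\<bar>)"
  define G where "G z = (\<delta> / \<gamma> * phi_inv \<sigma> z) powi r * (2 / (1 + phi_inv \<sigma> z))" for z
  have \<sigma>: "\<sigma> > 0"
    unfolding \<sigma>_def using assms by simp
  have phi_pos: "phi_inv \<sigma> z > 0" for z
    unfolding phi_inv_eq_phi_inv_sqrt_sq[OF \<sigma>] using phi_inv_sqrt_pos[of \<sigma> z] by simp
  have even: "G z + G (- z) = 2 * (\<delta> / \<gamma>) powi r * poly P z" for z
    unfolding G_def P_def using ig_moment_integrand_even_part[of "\<delta> / \<gamma>" \<sigma> z r] assms(2,3) \<sigma> by simp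
  have "\<delta> / \<gamma> * phi_inv \<sigma> z \<noteq> 0" "1 + phi_inv \<sigma> z \<noteq> 0" for z
    using assms(2,3) phi_pos[of z] by auto
  then have "continuous_on UNIV G"
    unfolding G_def using \<sigma> by (intro continuous_intros continuous_phi_inv) auto
  then have meas: "G \<in> borel_measurable borel"
    by (rule borel_measurable_continuous_onI)
  have nonneg: "G z \<ge> 0" for z
    unfolding G_def using assms(2,3) phi_pos[of z] by (simp add: add_pos_pos)
  have int_even: "integrable lborel (\<lambda>z. (G z + G (- z)) * std_normal_density z)"
    unfolding even using integrable_poly_std_normal[of P] by (simp add: mult.assoc)
  have int: "integrable lborel (\<lambda>z. G z * std_normal_density z)"
    and eq: "(LINT z|lborel. G z * std_normal_density z)
           = (\<delta> / \<gamma>) powi r * (LINT t|lborel. poly P t * std_normal_density t)"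
    using std_normal_integral_even_part[OF nonneg meas int_even] unfolding even
    by (simp_all add: mult.assoc)
  have "continuous_on {0<..} (\<lambda>t::real. t powi r)"
    by (intro continuous_intros) auto
  from ig_set_integral_substitution[OF assms(2,3) this, folded \<sigma>_def]
  show "set_integrable lborel {0<..} (\<lambda>t. t powi r * ig_density \<gamma> \<delta> t)"
    and "(LINT t:{0<..}|lborel. t powi r * ig_density \<gamma> \<delta> t)
         = (\<delta> / \<gamma>) powi r * (LINT t|lborel. poly (fib_poly (1 / \<sigma>) (nat \<bar>2 * r - 1\<bar>)) t * std_normal_density t)"
    using int eq unfolding G_def P_def by (simp_all add: mult.assoc)
qed

lemma gauss_hermite_ig_moment_sum:
  fixes \<gamma> \<delta> :: real and r :: int
  defines "\<sigma> \<equiv> sqrt (\<gamma> * \<delta>)"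
  assumes "gauss_hermite n z h" and "\<gamma> > 0" and "\<delta> > 0" and "1 - int n \<le> r" and "r \<le> int n"
  shows "(\<Sum>k=1..n. (\<delta> / \<gamma> * phi_inv \<sigma> (z k)) powi r * (2 * h k / (1 + phi_inv \<sigma> (z k))))
       = (\<delta> / \<gamma>) powi r * (LINT t|lborel. poly (fib_poly (1 / \<sigma>) (nat \<bar>2 * r - 1\<bar>)) t * std_normal_density t)"
proof -
  define P where "P = fib_poly (1 / \<sigma>) (nat \<bar>2 * r - 1\<bar>)"
  define G where "G z = (\<delta> / \<gamma> * phi_inv \<sigma> z) powi r * (2 / (1 + phi_inv \<sigma> z))" for z
  have \<sigma>: "\<sigma> > 0"
    unfolding \<sigma>_def using assms(3,4) by simp
  have "degree P \<le> 2 * n - 1"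
    unfolding P_def using degree_fib_poly[of "1 / \<sigma>" "nat \<bar>2 * r - 1\<bar>"] assms(5,6) by linarith
  have "(\<Sum>k=1..n. (\<delta> / \<gamma> * phi_inv \<sigma> (z k)) powi r * (2 * h k / (1 + phi_inv \<sigma> (z k))))
      = (\<Sum>k=1..n. h k * G (z k))"
    unfolding G_def by (intro sum.cong) auto
  also have "\<dots> = (\<Sum>k=1..n. h k * (G (z k) + G (- z k))) / 2"
    using gauss_hermite_sum_uminus[OF assms(2), of G] by (simp add: distrib_left sum.distrib)
  also have "\<dots> = (\<delta> / \<gamma>) powi r * (\<Sum>k=1..n. h k * poly P (z k))"
    unfolding G_def P_def ig_moment_integrand_even_part[OF divide_pos_pos[OF assms(4,3)] \<sigma>]
    by (simp add: sum_distrib_left mult_ac)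
  also have "\<dots> = (\<delta> / \<gamma>) powi r * (LINT t|lborel. poly P t * std_normal_density t)"
    using gauss_hermite_exact[OF assms(2) \<open>degree P \<le> 2 * n - 1\<close>] by simp
  finally show ?thesis
    unfolding P_def .
qed

theorem theorem1:
  fixes \<gamma> \<delta> :: real and n :: nat and z h :: "nat \<Rightarrow> real"
  assumes "\<gamma> > 0" and "\<delta> > 0" and "n \<ge> 1"
    and "gauss_hermite n z h"
  defines "\<sigma> \<equiv> sqrt (\<gamma> * \<delta>)"
  defines "x \<equiv> (\<lambda>k. \<delta> / \<gamma> * phi_inv \<sigma> (z k))"
  defines "w \<equiv> (\<lambda>k. 2 * h k / (1 + phi_inv \<sigma> (z k)))"
  shows "\<forall>r::int. 1 - int n \<le> r \<and> r \<le> int n \<longrightarrow>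
           set_integrable lborel {0<..} (\<lambda>t. t powi r * ig_density \<gamma> \<delta> t) \<and>
           (LINT t:{0<..}|lborel. t powi r * ig_density \<gamma> \<delta> t) = (\<Sum>k=1..n. x k powi r * w k)"
proof (intro allI impI conjI)
  fix r :: int
  assume "1 - int n \<le> r \<and> r \<le> int n"
  then show "set_integrable lborel {0<..} (\<lambda>t. t powi r * ig_density \<gamma> \<delta> t)"
    and "(LINT t:{0<..}|lborel. t powi r * ig_density \<gamma> \<delta> t) = (\<Sum>k=1..n. x k powi r * w k)"
    using ig_moment_eq_normal_integral[OF assms(1,2), of r]
      gauss_hermite_ig_moment_sum[OF assms(4,1,2), of r]
    unfolding x_def w_def \<sigma>_def by simp_all
qed

end
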